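(* Let $c_n$ denote the minimal Colless index among rooted binary trees with $n$ leaves. Then: (1) for every integer $k\geq 0$, $c_{2^k+1}=k$; (2) for every integer $k\geq 1$, $c_{2^k-1}=k-1$; (3) for every integer $k\geq 1$ and every $j\in\{1,\dots,2^{k-1}-1\}$, $c_{2^{k-1}+j}=c_{2^k-j}$.
   Context: A rooted binary tree with $n\geq 2$ leaves is a rooted tree whose root has degree 2 and all other internal nodes have degree 3; for $n=1$ it is a single node. For an internal node $v$ with children $v_1,v_2$, let $\kappa(v_i)$ be the number of leaves descending from $v_i$ ($1$ if a leaf). The Colless index is $\mathcal{C}(T)=\sum_v|\kappa(v_1)-\kappa(v_2)|$ over internal nodes $v$. *)

theory Defs
  imports Main
begin

text \<open>Children are ordered here, but the Colless index and the leaf count are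
  invariant under swapping children, so the minimum is unaffected.\<close>
datatype btree = Leaf | Node btree btree

fun leaves :: "btree \<Rightarrow> nat" where
  "leaves Leaf = 1"
| "leaves (Node l r) = leaves l + leaves r"

fun colless :: "btree \<Rightarrow> nat" where
  "colless Leaf = 0"
| "colless (Node l r) = colless l + colless r +
     (if leaves l \<ge> leaves r then leaves l - leaves r else leaves r - leaves l)"

definition min_colless :: "nat \<Rightarrow> nat" where
  "min_colless n = Min (colless ` {t. leaves t = n})"

end

theory Submission
  imports Defs
begin

(* The minimum is attained by the maximally balanced tree, which splits n leaves into
   n - n div 2 and n div 2. Its Colless index b satisfies b (2n) = 2 b n and
   b (2n+1) = b (n+1) + b n + 1. Optimality reduces, by induction on trees, to
   b (x + y) <= b x + b y + |x - y|, which is proved by strong induction on x + y with a case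
   split on the parities of x and y. The three identities then follow from the doubling
   recursions by induction on k: b (2^k + 1) = k, and b (2^k + i) = b (2^k + j) whenever
   i + j = 2^k; part (2) is the instance i = 1 of the latter. *)

function balanced_colless :: "nat \<Rightarrow> nat" where
  "balanced_colless n =
     (if n \<le> 1 then 0
      else balanced_colless (n - n div 2) + balanced_colless (n div 2) + n mod 2)"
  by auto
termination by (relation "measure id") auto

declare balanced_colless.simps [simp del]

lemma balanced_colless_le_1 [simp]: "n \<le> 1 \<Longrightarrow> balanced_colless n = 0"
  by (simp add: balanced_colless.simps[of n])

lemma balanced_colless_eq:
  assumes "n \<ge> 2"
  shows "balanced_colless n = balanced_colless (n - n div 2) + balanced_colless (n div 2) + n mod 2"
  using assms by (simp add: balanced_colless.simps[of n])

lemma balanced_colless_double: "balanced_colless (2 * n) = 2 * balanced_colless n"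
  by (cases "n = 0") (simp_all add: balanced_colless_eq[of "2 * n"])

lemma balanced_colless_double_Suc:
  assumes "n \<ge> 1"
  shows "balanced_colless (2 * n + 1) = balanced_colless (n + 1) + balanced_colless n + 1"
proof -
  have "(2 * n + 1) div 2 = n" "2 * n + 1 - n = n + 1" "(2 * n + 1) mod 2 = 1"
    by presburger+
  then show ?thesis using assms balanced_colless_eq[of "2 * n + 1"] by simp
qed

definition balanced_split_bound :: "nat \<Rightarrow> nat \<Rightarrow> bool" where
  "balanced_split_bound a b \<longleftrightarrow>
     int (balanced_colless (a + b))
       \<le> int (balanced_colless a) + int (balanced_colless b) + \<bar>int a - int b\<bar>"

lemma balanced_split_bound_commute: "balanced_split_bound a b \<longleftrightarrow> balanced_split_bound b a"
  unfolding balanced_split_bound_def by (simp add: add.commute abs_minus_commute)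

lemma balanced_split_bound_0: "balanced_split_bound a 0"
  unfolding balanced_split_bound_def by simp

lemma balanced_split_bound_double:
  "balanced_split_bound x y \<Longrightarrow> balanced_split_bound (2 * x) (2 * y)"
  unfolding balanced_split_bound_def
  using balanced_colless_double[of "x + y"] by (simp add: balanced_colless_double)

lemma balanced_split_bound_double_double_Suc:
  assumes "x \<ge> 1" "balanced_split_bound x y" "balanced_split_bound x (y + 1)"
  shows "balanced_split_bound (2 * x) (2 * y + 1)"
proof -
  have sum: "balanced_colless (2 * x + (2 * y + 1))
      = balanced_colless (x + (y + 1)) + balanced_colless (x + y) + 1"
    using balanced_colless_double_Suc[of "x + y"] assms(1) by (simp add: algebra_simps)
  show ?thesis
  proof (cases "y = 0")
    case True
    then show ?thesis using assms(1,3) sum unfolding balanced_split_bound_def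
      by (simp add: balanced_colless_double)
  next
    case False
    then show ?thesis using assms(2,3) sum balanced_colless_double_Suc[of y]
      unfolding balanced_split_bound_def by (simp add: balanced_colless_double)
  qed
qed

lemma balanced_split_bound_double_Suc_double_Suc:
  assumes "balanced_split_bound (x + 1) y" "balanced_split_bound x (y + 1)"
  shows "balanced_split_bound (2 * x + 1) (2 * y + 1)"
proof -
  have sum: "balanced_colless (2 * x + 1 + (2 * y + 1)) = 2 * balanced_colless (x + y + 1)"
    using balanced_colless_double[of "x + y + 1"] by (simp add: algebra_simps)
  consider "x = 0" | "y = 0" | "x \<ge> 1" "y \<ge> 1" by linarith
  then show ?thesis
  proof cases
    case 1
    then show ?thesis using assms(1) sum balanced_colless_double_Suc[of y]
      unfolding balanced_split_bound_def by (cases "y = 0") simp_all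
  next
    case 2
    then show ?thesis using assms(2) sum balanced_colless_double_Suc[of x]
      unfolding balanced_split_bound_def by (cases "x = 0") simp_all
  next
    case 3
    then show ?thesis using assms sum balanced_colless_double_Suc[of x] balanced_colless_double_Suc[of y]
      unfolding balanced_split_bound_def by (simp add: algebra_simps)
  qed
qed

lemma balanced_split_bound: "balanced_split_bound a b"
proof (induction "a + b" arbitrary: a b rule: less_induct)
  case less
  show ?case
  proof (cases "a = 0 \<or> b = 0")
    case True
    then show ?thesis using balanced_split_bound_0 balanced_split_bound_commute by blast
  next
    case False
    define x y where "x = a div 2" and "y = b div 2"
    consider "a = 2 * x" "b = 2 * y" | "a = 2 * x" "b = 2 * y + 1"
      | "a = 2 * x + 1" "b = 2 * y" | "a = 2 * x + 1" "b = 2 * y + 1"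
    proof -
      have "a = 2 * x \<or> a = 2 * x + 1" "b = 2 * y \<or> b = 2 * y + 1"
        unfolding x_def y_def by presburger+
      then show thesis using that by blast
    qed
    then show ?thesis
    proof cases
      case 1
      then show ?thesis using less balanced_split_bound_double False by simp
    next
      case 2
      then show ?thesis using less balanced_split_bound_double_double_Suc False by simp
    next
      case 3
      then show ?thesis
        using less balanced_split_bound_double_double_Suc balanced_split_bound_commute False by simp
    next
      case 4
      then show ?thesis using less balanced_split_bound_double_Suc_double_Suc by simp
    qed
  qed
qed

lemma leaves_neq_0: "leaves t \<noteq> 0"
  by (induction t) auto

lemma balanced_colless_le_colless: "balanced_colless (leaves t) \<le> colless t"
proof (induction t)
  case Leaf
  show ?case by simp
next
  case (Node l r)
  then show ?case
    using balanced_split_bound[of "leaves l" "leaves r"] unfolding balanced_split_bound_def by auto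
qed

function balanced_tree :: "nat \<Rightarrow> btree" where
  "balanced_tree n =
     (if n \<le> 1 then Leaf else Node (balanced_tree (n - n div 2)) (balanced_tree (n div 2)))"
  by auto
termination by (relation "measure id") auto

declare balanced_tree.simps [simp del]

lemma leaves_colless_balanced_tree:
  assumes "n \<ge> 1"
  shows "leaves (balanced_tree n) = n \<and> colless (balanced_tree n) = balanced_colless n"
  using assms
proof (induction n rule: less_induct)
  case (less n)
  show ?case
  proof (cases "n = 1")
    case True
    then show ?thesis by (simp add: balanced_tree.simps)
  next
    case False
    then have "n \<ge> 2" using less.prems by simp
    then have "leaves (balanced_tree (n - n div 2)) = n - n div 2 \<and>
        colless (balanced_tree (n - n div 2)) = balanced_colless (n - n div 2)"
      and "leaves (balanced_tree (n div 2)) = n div 2 \<and>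
        colless (balanced_tree (n div 2)) = balanced_colless (n div 2)"
      using less.IH by auto
    moreover have "balanced_tree n = Node (balanced_tree (n - n div 2)) (balanced_tree (n div 2))"
      using \<open>n \<ge> 2\<close> by (simp add: balanced_tree.simps[of n])
    moreover have "n div 2 \<le> n - n div 2" "n - n div 2 - n div 2 = n mod 2"
      by simp_all presburger
    ultimately show ?thesis
      using balanced_colless_eq[OF \<open>n \<ge> 2\<close>] by simp
  qed
qed

lemma finite_leaves_le: "finite {t. leaves t \<le> n}"
proof (induction n)
  case 0
  show ?case by (simp add: leaves_neq_0)
next
  case (Suc n)
  have "{t. leaves t \<le> Suc n}
      \<subseteq> insert Leaf (case_prod Node ` ({t. leaves t \<le> n} \<times> {t. leaves t \<le> n}))"
  proof
    fix t assume t: "t \<in> {t. leaves t \<le> Suc n}"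
    show "t \<in> insert Leaf (case_prod Node ` ({t. leaves t \<le> n} \<times> {t. leaves t \<le> n}))"
    proof (cases t)
      case (Node l r)
      then show ?thesis using t leaves_neq_0[of l] leaves_neq_0[of r] by force
    qed simp
  qed
  then show ?case using Suc by (auto intro: finite_subset)
qed

lemma min_colless_eq_balanced_colless:
  assumes "n \<ge> 1"
  shows "min_colless n = balanced_colless n"
  unfolding min_colless_def
proof (rule Min_eqI)
  show "finite (colless ` {t. leaves t = n})"
    by (intro finite_imageI finite_subset[OF _ finite_leaves_le[of n]]) auto
  show "balanced_colless n \<in> colless ` {t. leaves t = n}"
    using leaves_colless_balanced_tree[OF assms] by force
  show "balanced_colless n \<le> c" if "c \<in> colless ` {t. leaves t = n}" for c
    using that balanced_colless_le_colless by blast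
qed

lemma balanced_colless_pow2: "balanced_colless (2 ^ k) = 0"
  by (induction k) (simp_all add: balanced_colless_double)

lemma balanced_colless_pow2_Suc: "balanced_colless (2 ^ k + 1) = k"
proof (induction k)
  case 0
  then show ?case using balanced_colless_double[of 1] by (simp add: numeral_2_eq_2)
next
  case (Suc k)
  have "balanced_colless (2 * 2 ^ k + 1) = balanced_colless (2 ^ k + 1) + balanced_colless (2 ^ k) + 1"
    by (rule balanced_colless_double_Suc) simp
  then show ?case using Suc balanced_colless_pow2 by simp
qed

(* Part (3) in a symmetric form, free of truncated subtraction. *)
lemma balanced_colless_reflect:
  "i + j = 2 ^ k \<Longrightarrow> balanced_colless (2 ^ k + i) = balanced_colless (2 ^ k + j)"
proof (induction k arbitrary: i j)
  case 0
  then show ?case using balanced_colless_double[of 1] by (auto simp: add_is_1 numeral_2_eq_2)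
next
  case (Suc k)
  show ?case
  proof (cases "even i")
    case True
    then obtain i' j' where i: "i = 2 * i'" and j: "j = 2 * j'"
      using Suc.prems by (metis evenE even_add even_mult_iff even_numeral power_Suc)
    then have "i' + j' = 2 ^ k" using Suc.prems by simp
    then show ?thesis using Suc.IH i j
      by (metis balanced_colless_double distrib_left power_Suc)
  next
    case False
    then obtain i' j' where i: "i = 2 * i' + 1" and j: "j = 2 * j' + 1"
      using Suc.prems by (metis oddE even_add even_mult_iff even_numeral power_Suc)
    then have sum: "(i' + 1) + j' = 2 ^ k" "i' + (j' + 1) = 2 ^ k" using Suc.prems by simp_all
    have "balanced_colless (2 ^ Suc k + i) = balanced_colless (2 * (2 ^ k + i') + 1)"
      using i by (simp add: algebra_simps)
    also have "\<dots> = balanced_colless (2 ^ k + (i' + 1)) + balanced_colless (2 ^ k + i') + 1"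
      by (subst balanced_colless_double_Suc) (simp_all add: Suc_leI)
    also have "\<dots> = balanced_colless (2 ^ k + (j' + 1)) + balanced_colless (2 ^ k + j') + 1"
      using Suc.IH[OF sum(1)] Suc.IH[OF sum(2)] by simp
    also have "\<dots> = balanced_colless (2 * (2 ^ k + j') + 1)"
      by (subst balanced_colless_double_Suc) (simp_all add: Suc_leI)
    also have "\<dots> = balanced_colless (2 ^ Suc k + j)"
      using j by (simp add: algebra_simps)
    finally show ?thesis .
  qed
qed

lemma min_colless_pow2_Suc: "min_colless (2 ^ k + 1) = k"
  using min_colless_eq_balanced_colless balanced_colless_pow2_Suc by simp

lemma min_colless_reflect:
  assumes "i + j = 2 ^ k"
  shows "min_colless (2 ^ k + i) = min_colless (2 ^ k + j)"
proof -
  have "2 ^ k + i \<ge> 1" "2 ^ k + j \<ge> 1"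
    by (simp_all add: Suc_leI)
  then show ?thesis
    using balanced_colless_reflect[OF assms] by (simp add: min_colless_eq_balanced_colless)
qed

theorem proposition1:
  shows "(\<forall>k::nat. min_colless (2^k + 1) = k)
    \<and> (\<forall>k::nat. k \<ge> 1 \<longrightarrow> min_colless (2^k - 1) = k - 1)
    \<and> (\<forall>k::nat. \<forall>j::nat. k \<ge> 1 \<and> 1 \<le> j \<and> j \<le> 2^(k-1) - 1 \<longrightarrow>
          min_colless (2^(k-1) + j) = min_colless (2^k - j))"
proof (intro conjI allI impI)
  fix k :: nat
  show "min_colless (2^k + 1) = k"
    by (rule min_colless_pow2_Suc)
next
  fix k :: nat
  assume "k \<ge> 1"
  then obtain m where k: "k = Suc m" by (cases k) auto
  have "(2::nat) ^ k - 1 = 2 ^ m + (2 ^ m - 1)"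
    using k by simp
  also have "min_colless \<dots> = min_colless (2 ^ m + 1)"
    by (rule min_colless_reflect) simp
  finally show "min_colless (2^k - 1) = k - 1"
    using k min_colless_pow2_Suc by simp
next
  fix k j :: nat
  assume "k \<ge> 1 \<and> 1 \<le> j \<and> j \<le> 2^(k-1) - 1"
  then obtain m where k: "k = Suc m" and j: "j \<le> 2 ^ m" by (cases k) auto
  have "min_colless (2^(k-1) + j) = min_colless (2 ^ m + (2 ^ m - j))"
    using k j min_colless_reflect[of j "2 ^ m - j" m] by simp
  also have "2 ^ m + (2 ^ m - j) = 2^k - j"
    using k j by simp
  finally show "min_colless (2^(k-1) + j) = min_colless (2^k - j)" .
qed

end
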